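(* Let $\alpha,\beta\in[0,1]$ with $\alpha+\beta=1$, let $0<\delta<1/2$, and let $\xi$ be a real number with $\inf_{n\in\mathbb{N}} n\|n\xi\|\geqslant\delta$. Then for every positive integer $p$, $$\#\Big\{x\in\mathbb{N}:\ p<x\leqslant 2p,\ \|x\xi\|\leqslant \frac{\delta}{(p\log(p+1))^\beta}\Big\}\leqslant \frac{(24\delta+2)\,p^\alpha}{(\log(p+1))^\beta}.$$
   Context: $\|t\|$ denotes the distance from the real number $t$ to the nearest integer; $\log$ is the natural logarithm. *)

theory Defs
  imports Complex_Main
begin

definition dist_int :: "real \<Rightarrow> real" where
  "dist_int t = (INF k\<in>(UNIV::int set). \<bar>t - of_int k\<bar>)"

end

theory Submission
  imports Defs
begin

text \<open>
  Write \<open>S\<close> for the set being counted and \<open>\<epsilon>\<close> for the threshold on \<open>\<parallel>x\<xi>\<parallel>\<close>. For \<open>x < y\<close> in \<open>S\<close>,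
  \<open>\<parallel>(y-x)\<xi>\<parallel> \<le> 2\<epsilon>\<close>, so the hypothesis \<open>n\<parallel>n\<xi>\<parallel> \<ge> \<delta>\<close> forces the gap \<open>y - x \<ge> \<delta>/(2\<epsilon>)\<close>,
  and \<open>S\<close> has at most about \<open>2p\<epsilon>/\<delta>\<close> elements. When \<open>4p\<epsilon> < 1\<close> one does better:
  writing \<open>x\<xi> = a + e\<close>, \<open>y\<xi> = b + e'\<close>, the integer \<open>ya - xb = xe' - ye\<close> has modulus \<open>< 1\<close>,
  hence vanishes, which gives \<open>y\<parallel>(y-x)\<xi>\<parallel> \<le> (y-x)\<epsilon>\<close> and so the gap \<open>y - x \<ge> \<delta>/\<epsilon>\<close>.
  Either way \<open>#S \<le> 2p\<epsilon>/\<delta> + 4p\<epsilon>\<close>; the theorem is the case \<open>\<epsilon> = \<delta>/(p log(p+1))\<^sup>\<beta>\<close>.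
\<close>

lemma dist_int_eq: "dist_int t = \<bar>t - of_int (round t)\<bar>"
  unfolding dist_int_def
proof (rule antisym)
  show "(INF k\<in>(UNIV::int set). \<bar>t - of_int k\<bar>) \<le> \<bar>t - of_int (round t)\<bar>"
    by (rule cINF_lower) (auto intro: bdd_belowI[where m=0])
  show "\<bar>t - of_int (round t)\<bar> \<le> (INF k\<in>(UNIV::int set). \<bar>t - of_int k\<bar>)"
    by (rule cINF_greatest) (auto intro: round_diff_minimal)
qed

lemma dist_int_nonneg: "dist_int t \<ge> 0"
  by (simp add: dist_int_eq)

lemma dist_int_le: "dist_int t \<le> \<bar>t - of_int k\<bar>"
  by (simp add: dist_int_eq round_diff_minimal)

lemma dist_int_diff_le: "dist_int (s - t) \<le> dist_int s + dist_int t"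
proof -
  have "dist_int (s - t) \<le> \<bar>(s - t) - of_int (round s - round t)\<bar>" by (rule dist_int_le)
  also have "\<dots> \<le> \<bar>s - of_int (round s)\<bar> + \<bar>t - of_int (round t)\<bar>" by simp
  finally show ?thesis by (simp add: dist_int_eq)
qed

lemma le_mult_dist_int_of_INF_ge:
  assumes "(INF n\<in>{n::nat. n \<ge> 1}. real n * dist_int (real n * \<xi>)) \<ge> \<delta>" and "n \<ge> 1"
  shows "\<delta> \<le> real n * dist_int (real n * \<xi>)"
proof -
  have "bdd_below ((\<lambda>n. real n * dist_int (real n * \<xi>)) ` {n::nat. n \<ge> 1})"
    by (rule bdd_belowI[where m=0]) (auto simp: dist_int_nonneg)
  then have "(INF n\<in>{n::nat. n \<ge> 1}. real n * dist_int (real n * \<xi>)) \<le> real n * dist_int (real n * \<xi>)"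
    by (rule cINF_lower) (use assms(2) in auto)
  then show ?thesis using assms(1) by linarith
qed

lemma card_le_of_separated:
  fixes S :: "nat set" and G :: real
  assumes "G > 0" "a \<le> b" "S \<subseteq> {a..b}"
    and sep: "\<And>x y. x \<in> S \<Longrightarrow> y \<in> S \<Longrightarrow> x < y \<Longrightarrow> G \<le> real y - real x"
  shows "real (card S) \<le> (real b - real a) / G + 1"
proof -
  define f where "f x = nat \<lfloor>(real x - real a) / G\<rfloor>" for x :: nat
  have f_less: "f x < f y" if "x \<in> S" "y \<in> S" "x < y" for x y
  proof -
    have "(real y - real a) / G - (real x - real a) / G = (real y - real x) / G"
      by (simp add: diff_divide_distrib)
    also have "\<dots> \<ge> 1" using sep[OF that] \<open>G > 0\<close> by simp
    finally have "\<lfloor>(real x - real a) / G\<rfloor> + 1 \<le> \<lfloor>(real y - real a) / G\<rfloor>"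
      by (metis floor_add_int floor_mono of_int_1 le_diff_eq add.commute)
    moreover have "0 \<le> \<lfloor>(real x - real a) / G\<rfloor>" using that assms by auto
    ultimately show ?thesis unfolding f_def by linarith
  qed
  have "inj_on f S"
    by (rule inj_onI) (metis f_less less_irrefl nat_neq_iff)
  moreover have "f ` S \<subseteq> {0..nat \<lfloor>(real b - real a) / G\<rfloor>}"
  proof
    fix z assume "z \<in> f ` S"
    then obtain x where "x \<in> S" "z = f x" by auto
    moreover have "(real x - real a) / G \<le> (real b - real a) / G"
      using \<open>x \<in> S\<close> assms by (auto simp: divide_right_mono)
    ultimately show "z \<in> {0..nat \<lfloor>(real b - real a) / G\<rfloor>}"
      unfolding f_def by (auto intro: nat_mono floor_mono)
  qed
  ultimately have "card S \<le> nat \<lfloor>(real b - real a) / G\<rfloor> + 1"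
    using card_mono[of "{0..nat \<lfloor>(real b - real a) / G\<rfloor>}" "f ` S"] by (simp add: card_image)
  moreover have "real (nat \<lfloor>(real b - real a) / G\<rfloor>) \<le> (real b - real a) / G"
    using assms by simp
  ultimately show ?thesis by linarith
qed

lemma mult_dist_int_diff_le:
  fixes x y :: nat
  assumes "x < y" "dist_int (real x * \<xi>) \<le> \<epsilon>" "dist_int (real y * \<xi>) \<le> \<epsilon>"
    and "(real x + real y) * \<epsilon> < 1"
  shows "real y * dist_int ((real y - real x) * \<xi>) \<le> (real y - real x) * \<epsilon>"
proof -
  define a b where "a = round (real x * \<xi>)" and "b = round (real y * \<xi>)"
  define e e' where "e = real x * \<xi> - of_int a" and "e' = real y * \<xi> - of_int b"
  have e: "\<bar>e\<bar> \<le> \<epsilon>" and e': "\<bar>e'\<bar> \<le> \<epsilon>"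
    using assms(2,3) by (simp_all add: dist_int_eq a_def b_def e_def e'_def)
  have Z: "real_of_int (int y * a - int x * b) = real x * e' - real y * e"
    by (simp add: a_def b_def e_def e'_def algebra_simps)
  have "\<bar>real x * e' - real y * e\<bar> \<le> real x * \<bar>e'\<bar> + real y * \<bar>e\<bar>"
    by (metis abs_triangle_ineq4 abs_mult abs_of_nat)
  also have "\<dots> \<le> (real x + real y) * \<epsilon>"
    using mult_left_mono[OF e, of "real y"] mult_left_mono[OF e', of "real x"]
    by (simp add: algebra_simps)
  finally have "int y * a - int x * b = 0"
    using Z assms(4) by linarith
  then have "real y * (e' - e) = (real y - real x) * e'"
    using Z by (simp add: algebra_simps)
  then have "real y * \<bar>e' - e\<bar> = (real y - real x) * \<bar>e'\<bar>"
    using assms(1) by (metis abs_mult abs_of_nonneg of_nat_0_le_iff of_nat_less_iff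
                         diff_ge_0_iff_ge less_imp_le)
  moreover have "dist_int ((real y - real x) * \<xi>) \<le> \<bar>e' - e\<bar>"
    using dist_int_le[of "(real y - real x) * \<xi>" "b - a"]
    by (simp add: e_def e'_def algebra_simps)
  ultimately have "real y * dist_int ((real y - real x) * \<xi>) \<le> (real y - real x) * \<bar>e'\<bar>"
    by (metis mult_left_mono of_nat_0_le_iff)
  also have "\<dots> \<le> (real y - real x) * \<epsilon>"
    using e' assms(1) by (intro mult_left_mono) auto
  finally show ?thesis .
qed

definition near_int_multiples :: "real \<Rightarrow> real \<Rightarrow> nat \<Rightarrow> nat set" where
  "near_int_multiples \<xi> \<epsilon> p = {x. p < x \<and> x \<le> 2*p \<and> dist_int (real x * \<xi>) \<le> \<epsilon>}"

lemma card_near_int_multiples_le_of_separated: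
  assumes "G > 0" "x \<in> near_int_multiples \<xi> \<epsilon> p"
    and sep: "\<And>u v. u \<in> near_int_multiples \<xi> \<epsilon> p \<Longrightarrow> v \<in> near_int_multiples \<xi> \<epsilon> p \<Longrightarrow>
                u < v \<Longrightarrow> G \<le> real v - real u"
  shows "real (card (near_int_multiples \<xi> \<epsilon> p)) \<le> (real p - 1) / G + 1"
proof -
  have "Suc p \<le> 2 * p" using assms(2) by (auto simp: near_int_multiples_def)
  moreover have "near_int_multiples \<xi> \<epsilon> p \<subseteq> {Suc p..2*p}"
    by (auto simp: near_int_multiples_def)
  ultimately have "real (card (near_int_multiples \<xi> \<epsilon> p)) \<le> (real (2*p) - real (Suc p)) / G + 1"
    by (rule card_le_of_separated[OF \<open>G > 0\<close> _ _ sep])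
  then show ?thesis by simp
qed

lemma gap_ge_of_dist_int_le:
  fixes x y :: nat
  assumes dioph: "\<And>n::nat. n \<ge> 1 \<Longrightarrow> \<delta> \<le> real n * dist_int (real n * \<xi>)" and "x < y"
    and "dist_int (real x * \<xi>) \<le> \<epsilon>" "dist_int (real y * \<xi>) \<le> \<epsilon>"
  shows "\<delta> \<le> 2 * \<epsilon> * (real y - real x)"
proof -
  have "dist_int ((real y - real x) * \<xi>) \<le> 2 * \<epsilon>"
    using dist_int_diff_le[of "real y * \<xi>" "real x * \<xi>"] assms(3,4)
    by (simp add: algebra_simps)
  then have "(real y - real x) * dist_int ((real y - real x) * \<xi>) \<le> (real y - real x) * (2 * \<epsilon>)"
    using assms(2) by (intro mult_left_mono) auto
  moreover have "\<delta> \<le> (real y - real x) * dist_int ((real y - real x) * \<xi>)"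
    using dioph[of "y - x"] assms(2) by (simp add: of_nat_diff)
  ultimately show ?thesis by (simp add: mult_ac)
qed

lemma gap_ge_of_dist_int_le_small:
  fixes x y :: nat
  assumes dioph: "\<And>n::nat. n \<ge> 1 \<Longrightarrow> \<delta> \<le> real n * dist_int (real n * \<xi>)" and "x < y"
    and "dist_int (real x * \<xi>) \<le> \<epsilon>" "dist_int (real y * \<xi>) \<le> \<epsilon>"
    and "(real x + real y) * \<epsilon> < 1"
  shows "\<delta> \<le> \<epsilon> * (real y - real x)"
proof -
  have "\<delta> \<le> (real y - real x) * dist_int ((real y - real x) * \<xi>)"
    using dioph[of "y - x"] assms(2) by (simp add: of_nat_diff)
  then have "\<delta> * real y \<le> (real y - real x) * dist_int ((real y - real x) * \<xi>) * real y"
    by (simp add: mult_right_mono)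
  also have "\<dots> = (real y - real x) * (real y * dist_int ((real y - real x) * \<xi>))"
    by (simp add: mult_ac)
  also have "\<dots> \<le> (real y - real x) * ((real y - real x) * \<epsilon>)"
    using mult_dist_int_diff_le[OF assms(2-5)] assms(2) by (intro mult_left_mono) auto
  also have "\<dots> \<le> real y * ((real y - real x) * \<epsilon>)"
    using assms(2,3) dist_int_nonneg[of "real x * \<xi>"] by (intro mult_right_mono) auto
  finally show ?thesis using assms(2) by (simp add: mult_ac)
qed

lemma card_near_int_multiples_le_of_two:
  assumes "0 < \<delta>"
    and dioph: "\<And>n::nat. n \<ge> 1 \<Longrightarrow> \<delta> \<le> real n * dist_int (real n * \<xi>)"
    and "x \<in> near_int_multiples \<xi> \<epsilon> p" "y \<in> near_int_multiples \<xi> \<epsilon> p" "x < y"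
  shows "real (card (near_int_multiples \<xi> \<epsilon> p)) \<le> 2 * real p * \<epsilon> / \<delta> + 4 * real p * \<epsilon>"
    (is "real (card ?S) \<le> ?bound")
proof -
  have mem: "p < u" "u \<le> 2 * p" "dist_int (real u * \<xi>) \<le> \<epsilon>" if "u \<in> ?S" for u
    using that by (simp_all add: near_int_multiples_def)
  have "0 < 2 * \<epsilon> * (real y - real x)"
    using gap_ge_of_dist_int_le[OF dioph \<open>x < y\<close> mem(3)[OF assms(3)] mem(3)[OF assms(4)]] \<open>0 < \<delta>\<close>
    by linarith
  then have "0 < \<epsilon>" using \<open>x < y\<close> by (simp add: zero_less_mult_iff)
  show ?thesis
  proof (cases "4 * real p * \<epsilon> < 1")
    case True
    have sep: "\<delta> / \<epsilon> \<le> real v - real u" if "u \<in> ?S" "v \<in> ?S" "u < v" for u v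
    proof -
      have "(real u + real v) * \<epsilon> \<le> 4 * real p * \<epsilon>"
        using mem[OF that(1)] mem[OF that(2)] \<open>0 < \<epsilon>\<close> by (intro mult_right_mono) auto
      then have "\<delta> \<le> \<epsilon> * (real v - real u)"
        using True that mem by (intro gap_ge_of_dist_int_le_small[OF dioph]) auto
      then show ?thesis using \<open>0 < \<epsilon>\<close> by (simp add: divide_le_eq mult.commute)
    qed
    have "\<delta> / \<epsilon> < real p" using sep[OF assms(3-5)] mem[OF assms(3)] mem[OF assms(4)] by simp
    then have "1 < real p * \<epsilon> / \<delta>" using \<open>0 < \<epsilon>\<close> \<open>0 < \<delta>\<close> by (simp add: field_simps)
    have "real (card ?S) \<le> (real p - 1) / (\<delta> / \<epsilon>) + 1"
      using card_near_int_multiples_le_of_separated[OF _ assms(3) sep] \<open>0 < \<epsilon>\<close> \<open>0 < \<delta>\<close> by simp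
    also have "\<dots> \<le> real p * \<epsilon> / \<delta> + 1" using \<open>0 < \<epsilon>\<close> \<open>0 < \<delta>\<close> by (simp add: field_simps)
    also have "\<dots> \<le> ?bound"
    proof -
      have "2 * real p * \<epsilon> / \<delta> = 2 * (real p * \<epsilon> / \<delta>)" by simp
      moreover have "0 \<le> 4 * real p * \<epsilon>" using \<open>0 < \<epsilon>\<close> by simp
      ultimately show ?thesis using \<open>1 < real p * \<epsilon> / \<delta>\<close> by (smt (verit))
    qed
    finally show ?thesis .
  next
    case False
    have sep: "\<delta> / (2 * \<epsilon>) \<le> real v - real u" if "u \<in> ?S" "v \<in> ?S" "u < v" for u v
      using gap_ge_of_dist_int_le[OF dioph that(3) mem(3)[OF that(1)] mem(3)[OF that(2)]] \<open>0 < \<epsilon>\<close>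
      by (simp add: divide_le_eq mult.commute)
    have "real (card ?S) \<le> (real p - 1) / (\<delta> / (2 * \<epsilon>)) + 1"
      using card_near_int_multiples_le_of_separated[OF _ assms(3) sep] \<open>0 < \<epsilon>\<close> \<open>0 < \<delta>\<close> by simp
    also have "\<dots> \<le> 2 * real p * \<epsilon> / \<delta> + 1" using \<open>0 < \<epsilon>\<close> \<open>0 < \<delta>\<close> by (simp add: field_simps)
    also have "\<dots> \<le> ?bound" using False by simp
    finally show ?thesis .
  qed
qed

lemma card_near_int_multiples_le:
  assumes "0 < \<delta>" "0 \<le> \<epsilon>"
    and dioph: "\<And>n::nat. n \<ge> 1 \<Longrightarrow> \<delta> \<le> real n * dist_int (real n * \<xi>)"
  shows "real (card (near_int_multiples \<xi> \<epsilon> p)) \<le> 2 * real p * \<epsilon> / \<delta> + 4 * real p * \<epsilon>"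
    (is "real (card ?S) \<le> ?bound")
proof (cases "card ?S \<le> 1")
  case True
  have "real (card ?S) \<le> 2 * real p * \<epsilon> / \<delta>"
  proof (cases "?S = {}")
    case False
    then obtain x where x: "x \<in> ?S" by blast
    then have "\<delta> \<le> real x * dist_int (real x * \<xi>)" using dioph[of x] by (simp add: near_int_multiples_def)
    also have "\<dots> \<le> 2 * real p * \<epsilon>"
      using x dist_int_nonneg[of "real x * \<xi>"] by (intro mult_mono) (auto simp: near_int_multiples_def)
    finally have "1 \<le> 2 * real p * \<epsilon> / \<delta>" using \<open>0 < \<delta>\<close> by simp
    then show ?thesis using True by linarith
  qed (use assms(1,2) in simp)
  moreover have "0 \<le> 4 * real p * \<epsilon>" using \<open>0 \<le> \<epsilon>\<close> by simp
  ultimately show ?thesis by linarith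
next
  case False
  have "finite ?S" by (rule finite_subset[of _ "{..2*p}"]) (auto simp: near_int_multiples_def)
  then obtain u v where "u \<in> ?S" "v \<in> ?S" "u \<noteq> v"
    using False by (auto simp: card_le_Suc0_iff_eq)
  then show ?thesis
    using card_near_int_multiples_le_of_two[OF assms(1) dioph]
    by (cases "u < v") (auto simp: nat_neq_iff)
qed

theorem lemma2:
  fixes \<alpha> \<beta> \<delta> \<xi> :: real and p :: nat
  assumes "0 \<le> \<alpha>" "\<alpha> \<le> 1" "0 \<le> \<beta>" "\<beta> \<le> 1" "\<alpha> + \<beta> = 1"
    and "0 < \<delta>" "\<delta> < 1/2"
    and "(INF n\<in>{n::nat. n \<ge> 1}. real n * dist_int (real n * \<xi>)) \<ge> \<delta>"
    and "p > 0"
  shows "real (card {x::nat. p < x \<and> x \<le> 2*p \<and>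
            dist_int (real x * \<xi>) \<le> \<delta> / (real p * ln (real p + 1)) powr \<beta>})
         \<le> (24*\<delta> + 2) * real p powr \<alpha> / (ln (real p + 1)) powr \<beta>"
proof -
  define L where "L = ln (real p + 1)"
  define \<epsilon> where "\<epsilon> = \<delta> / (real p * L) powr \<beta>"
  have "L > 0" using \<open>p > 0\<close> by (simp add: L_def)
  have "0 \<le> \<epsilon>" using \<open>0 < \<delta>\<close> by (simp add: \<epsilon>_def)
  have "real p powr \<alpha> = real p / real p powr \<beta>"
    using \<open>p > 0\<close> \<open>\<alpha> + \<beta> = 1\<close> powr_diff[of "real p" 1 \<beta>] by (simp add: eq_diff_eq[symmetric])
  then have u: "real p * \<epsilon> / \<delta> = real p powr \<alpha> / L powr \<beta>"
    using \<open>0 < \<delta>\<close> \<open>L > 0\<close> by (simp add: \<epsilon>_def powr_mult)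
  have "real (card (near_int_multiples \<xi> \<epsilon> p)) \<le> 2 * real p * \<epsilon> / \<delta> + 4 * real p * \<epsilon>"
    by (rule card_near_int_multiples_le[OF \<open>0 < \<delta>\<close> \<open>0 \<le> \<epsilon>\<close> le_mult_dist_int_of_INF_ge[OF assms(8)]])
  also have "\<dots> \<le> (24*\<delta> + 2) * (real p * \<epsilon> / \<delta>)"
    using \<open>0 < \<delta>\<close> \<open>0 \<le> \<epsilon>\<close> by (simp add: field_simps)
  finally show ?thesis unfolding u by (simp add: near_int_multiples_def \<epsilon>_def L_def)
qed

end
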